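(* Let $M=P+\varepsilon D\in\mathbb{DH}[t]$ be a monic polynomial and let $N\in\mathbb{D}[t]$ be a monic polynomial of degree two which divides the norm polynomial $M\overline{M}$ in $\mathbb{D}[t]$, and suppose that the primal part of $N$ (a real polynomial) does not divide $P$ in $\mathbb{H}[t]$. Then there exists a unique $h\in\mathbb{DH}$ such that $t-h$ is a right factor of $M$ (i.e. $M=Q(t-h)$ for some $Q\in\mathbb{DH}[t]$) and $(t-h)(t-\overline{h})=N$.
   Context: $\mathbb{D}=\mathbb{R}[\varepsilon]/\langle\varepsilon^2\rangle$ denotes the dual numbers. $\mathbb{H}$ denotes the real quaternions with basis $1,\mathbf{i},\mathbf{j},\mathbf{k}$, $\mathbf{i}^2=\mathbf{j}^2=\mathbf{k}^2=\mathbf{i}\mathbf{j}\mathbf{k}=-1$. The dual quaternions $\mathbb{DH}$ are the $\mathbb{D}$-algebra $\mathbb{H}\otimes_{\mathbb{R}}\mathbb{D}$ ($\varepsilon$ commutes with $\mathbf{i},\mathbf{j},\mathbf{k}$); every $q\in\mathbb{DH}$ is $q=p+\varepsilon d$ with $p,d\in\mathbb{H}$ (primal and dual part). The conjugate of $q=q_0+q_1\mathbf{i}+q_2\mathbf{j}+q_3\mathbf{k}$ ($q_i\in\mathbb{D}$) is $\overline{q}=q_0-q_1\mathbf{i}-q_2\mathbf{j}-q_3\mathbf{k}$. $\mathbb{DH}[t]$ is the ring of polynomials with dual quaternion coefficients in which the indeterminate $t$ commutes with all coefficients. For $M=\sum m_it^i$, $\overline{M}=\sum\overline{m_i}t^i$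 and the norm polynomial is $M\overline{M}=\overline{M}M\in\mathbb{D}[t]$. Every $M\in\mathbb{DH}[t]$ is written $M=P+\varepsilon D$ with $P,D\in\mathbb{H}[t]$ (primal and dual part). Monic means leading coefficient $1$. *)

theory Defs
  imports "HOL-Computational_Algebra.Polynomial"
begin

datatype quat = Quat (qre: real) (qi: real) (qj: real) (qk: real)

lemma quat_eq_iff: "x = y \<longleftrightarrow> qre x = qre y \<and> qi x = qi y \<and> qj x = qj y \<and> qk x = qk y"
  by (cases x; cases y) auto

instantiation quat :: ring_1
begin
definition "0 = Quat 0 0 0 0"
definition "1 = Quat 1 0 0 0"
definition "x + y = Quat (qre x + qre y) (qi x + qi y) (qj x + qj y) (qk x + qk y)"
definition "x - y = Quat (qre x - qre y) (qi x - qi y) (qj x - qj y) (qk x - qk y)"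
definition "- x = Quat (- qre x) (- qi x) (- qj x) (- qk x)"
definition "x * y = Quat
   (qre x * qre y - qi x * qi y - qj x * qj y - qk x * qk y)
   (qre x * qi y + qi x * qre y + qj x * qk y - qk x * qj y)
   (qre x * qj y - qi x * qk y + qj x * qre y + qk x * qi y)
   (qre x * qk y + qi x * qj y - qj x * qi y + qk x * qre y)"
instance
  by standard (simp_all add: quat_eq_iff zero_quat_def one_quat_def plus_quat_def
      minus_quat_def uminus_quat_def times_quat_def algebra_simps)
end

definition qcnj :: "quat \<Rightarrow> quat" where
  "qcnj x = Quat (qre x) (- qi x) (- qj x) (- qk x)"

definition quat_of_real :: "real \<Rightarrow> quat" where
  "quat_of_real a = Quat a 0 0 0"

datatype dual = Dual (dre: real) (deps: real)

lemma dual_eq_iff: "x = y \<longleftrightarrow> dre x = dre y \<and> deps x = deps y"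
  by (cases x; cases y) auto

instantiation dual :: comm_ring_1
begin
definition "0 = Dual 0 0"
definition "1 = Dual 1 0"
definition "x + y = Dual (dre x + dre y) (deps x + deps y)"
definition "x - y = Dual (dre x - dre y) (deps x - deps y)"
definition "- x = Dual (- dre x) (- deps x)"
definition "x * y = Dual (dre x * dre y) (dre x * deps y + deps x * dre y)"
instance
  by standard (simp_all add: dual_eq_iff zero_dual_def one_dual_def plus_dual_def
      minus_dual_def uminus_dual_def times_dual_def algebra_simps)
end

datatype dquat = DQ (primal: quat) (dualpart: quat)

lemma dquat_eq_iff: "x = y \<longleftrightarrow> primal x = primal y \<and> dualpart x = dualpart y"
  by (cases x; cases y) auto

instantiation dquat :: ring_1
begin
definition "0 = DQ 0 0"
definition "1 = DQ 1 0"
definition "x + y = DQ (primal x + primal y) (dualpart x + dualpart y)"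
definition "x - y = DQ (primal x - primal y) (dualpart x - dualpart y)"
definition "- x = DQ (- primal x) (- dualpart x)"
definition "x * y = DQ (primal x * primal y) (primal x * dualpart y + dualpart x * primal y)"
instance
  by standard (simp_all add: dquat_eq_iff zero_dquat_def one_dquat_def plus_dquat_def
      minus_dquat_def uminus_dquat_def times_dquat_def algebra_simps)
end

definition dcnj :: "dquat \<Rightarrow> dquat" where
  "dcnj x = DQ (qcnj (primal x)) (qcnj (dualpart x))"

definition dquat_of_dual :: "dual \<Rightarrow> dquat" where
  "dquat_of_dual z = DQ (quat_of_real (dre z)) (quat_of_real (deps z))"

definition dq_scalar :: "dquat \<Rightarrow> dual" where
  "dq_scalar x = Dual (qre (primal x)) (qre (dualpart x))"

text \<open>The library's polynomial multiplication needs commutative coefficients;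
  we define the product with the indeterminate commuting with all coefficients
  (Cauchy product, coefficient order preserved).\<close>
definition pmul :: "'a::ring_1 poly \<Rightarrow> 'a poly \<Rightarrow> 'a poly" where
  "pmul p q = (\<Sum>i\<le>degree p. \<Sum>j\<le>degree q. monom (coeff p i * coeff q j) (i + j))"

definition pconj :: "dquat poly \<Rightarrow> dquat poly" where
  "pconj M = map_poly dcnj M"

text \<open>Norm polynomial \<open>M * conj M\<close>, which lies in \<open>\<DD>[t]\<close>; we read off its
  (dual-number) coefficients.\<close>
definition norm_poly :: "dquat poly \<Rightarrow> dual poly" where
  "norm_poly M = map_poly dq_scalar (pmul M (pconj M))"

definition primal_poly :: "dquat poly \<Rightarrow> quat poly" where
  "primal_poly M = map_poly primal M"

definition dual_primal_poly :: "dual poly \<Rightarrow> real poly" where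
  "dual_primal_poly N = map_poly dre N"

end

theory Submission
  imports Defs "HOL-Computational_Algebra.Polynomial_FPS"
begin

text \<open>Write \<open>x\<^sup>*\<close> for conjugates. As a polynomial with dual-number coefficients, \<open>N\<close> is
  central and self-conjugate. Divide: \<open>M = Q N + R\<close> with \<open>R = r\<^sub>0 + r\<^sub>1 t\<close>. Then \<open>N\<close>
  divides \<open>R R\<^sup>* = M M\<^sup>* - N (\<dots>)\<close>, and comparing degrees gives \<open>R R\<^sup>* = N s\<close> for a
  constant \<open>s\<close>, i.e. \<open>r\<^sub>1 r\<^sub>1\<^sup>* = s\<close>, \<open>r\<^sub>0 r\<^sub>1\<^sup>* + r\<^sub>1 r\<^sub>0\<^sup>* = n\<^sub>1 s\<close> and
  \<open>r\<^sub>0 r\<^sub>0\<^sup>* = n\<^sub>0 s\<close>. As the primal part of \<open>N\<close> does not divide \<open>P\<close>, the primal part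
  of \<open>R\<close> is nonzero, and this forces \<open>r\<^sub>1\<close> to be invertible. Then \<open>h = -r\<^sub>1\<inverse> r\<^sub>0\<close>
  gives \<open>R = r\<^sub>1 (t - h)\<close> and, cancelling \<open>s\<close>, \<open>(t - h)(t - h\<^sup>*) = N\<close>, whence
  \<open>M = (Q (t - h\<^sup>*) + r\<^sub>1)(t - h)\<close>. Conversely, if \<open>t - h'\<close> is a right factor of \<open>M\<close> with
  \<open>(t - h')(t - h'\<^sup>*) = N\<close>, it is also a right factor of \<open>R\<close>, so \<open>r\<^sub>0 = -r\<^sub>1 h'\<close> and
  \<open>h' = h\<close>.\<close>

lemma quat_of_real_0 [simp]: "quat_of_real 0 = 0"
  by (simp add: quat_of_real_def zero_quat_def)

lemma quat_of_real_mult: "quat_of_real a * quat_of_real b = quat_of_real (a * b)"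
  by (simp add: quat_of_real_def times_quat_def)

lemma quat_of_real_commute: "quat_of_real a * x = x * quat_of_real a"
  by (simp add: quat_of_real_def times_quat_def)

definition quat_norm_sq :: "quat \<Rightarrow> real" where
  "quat_norm_sq x = qre x ^ 2 + qi x ^ 2 + qj x ^ 2 + qk x ^ 2"

lemma quat_norm_sq_eq_0_iff: "quat_norm_sq x = 0 \<longleftrightarrow> x = 0"
  by (simp add: quat_norm_sq_def quat_eq_iff zero_quat_def add_nonneg_eq_0_iff)

lemma quat_mult_qcnj: "x * qcnj x = quat_of_real (quat_norm_sq x)"
  by (simp add: quat_norm_sq_def qcnj_def quat_of_real_def times_quat_def power2_eq_square)

lemma qcnj_mult_quat: "qcnj x * x = quat_of_real (quat_norm_sq x)"
  by (simp add: quat_norm_sq_def qcnj_def quat_of_real_def times_quat_def power2_eq_square)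

lemma quat_of_real_eq_0_iff: "quat_of_real a = 0 \<longleftrightarrow> a = 0"
  by (simp add: quat_of_real_def zero_quat_def)

lemma quat_mult_qcnj_eq_0_iff: "x * qcnj x = 0 \<longleftrightarrow> x = 0"
  by (simp add: quat_mult_qcnj quat_of_real_eq_0_iff quat_norm_sq_eq_0_iff)

instantiation quat :: division_ring
begin
definition "inverse x = quat_of_real (inverse (quat_norm_sq x)) * qcnj x"
definition "x div y = x * inverse (y :: quat)"
instance
proof
  fix x :: quat
  assume "x \<noteq> 0"
  then have "inverse (quat_norm_sq x) * quat_norm_sq x = 1"
    by (simp add: quat_norm_sq_eq_0_iff)
  then have inv: "quat_of_real (inverse (quat_norm_sq x)) * quat_of_real (quat_norm_sq x) = 1"
    by (simp add: quat_of_real_mult) (simp add: quat_of_real_def one_quat_def)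
  then show "inverse x * x = 1"
    by (simp add: inverse_quat_def mult.assoc qcnj_mult_quat)
  have "x * inverse x = quat_of_real (inverse (quat_norm_sq x)) * (x * qcnj x)"
    unfolding inverse_quat_def by (metis mult.assoc quat_of_real_commute)
  then show "x * inverse x = 1"
    using inv by (simp add: quat_mult_qcnj)
qed (simp_all add: divide_quat_def inverse_quat_def qcnj_def zero_quat_def quat_of_real_def times_quat_def)
end

lemma qcnj_eq_0_iff [simp]: "qcnj x = 0 \<longleftrightarrow> x = 0"
  by (simp add: qcnj_def quat_eq_iff zero_quat_def)

lemma primal_0 [simp]: "primal 0 = 0"
  and primal_add [simp]: "primal (x + y) = primal x + primal y"
  and primal_mult [simp]: "primal (x * y) = primal x * primal y"
  by (simp_all add: zero_dquat_def one_dquat_def plus_dquat_def times_dquat_def)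

lemma primal_sum: "primal (sum f A) = (\<Sum>a\<in>A. primal (f a))"
  by (induction A rule: infinite_finite_induct) simp_all

lemma primal_dcnj [simp]: "primal (dcnj x) = qcnj (primal x)"
  by (simp add: dcnj_def)

lemma dcnj_0 [simp]: "dcnj 0 = 0"
  and dcnj_dcnj [simp]: "dcnj (dcnj x) = x"
  and dcnj_add [simp]: "dcnj (x + y) = dcnj x + dcnj y"
  and dcnj_minus [simp]: "dcnj (- x) = - dcnj x"
  and dcnj_diff [simp]: "dcnj (x - y) = dcnj x - dcnj y"
  and dcnj_mult [simp]: "dcnj (x * y) = dcnj y * dcnj x"
  by (simp_all add: dquat_eq_iff quat_eq_iff dcnj_def qcnj_def zero_dquat_def one_dquat_def
      plus_dquat_def uminus_dquat_def minus_dquat_def times_dquat_def zero_quat_def one_quat_def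
      plus_quat_def uminus_quat_def minus_quat_def times_quat_def algebra_simps)

lemma dcnj_sum: "dcnj (sum f A) = (\<Sum>a\<in>A. dcnj (f a))"
  by (induction A rule: infinite_finite_induct) simp_all

lemma dcnj_eq_0_iff [simp]: "dcnj x = 0 \<longleftrightarrow> x = 0"
  by (metis dcnj_0 dcnj_dcnj)

lemma dcnj_mult_self_commute: "dcnj x * x = x * dcnj x"
  by (simp add: dcnj_def qcnj_def times_dquat_def times_quat_def plus_quat_def dquat_eq_iff
      quat_eq_iff algebra_simps)

text \<open>The self-conjugate dual quaternions are exactly the dual numbers, hence central.\<close>

lemma dcnj_fixed_imp_commute:
  assumes "dcnj x = x"
  shows "x * y = y * x"
  using assms by (simp add: dcnj_def qcnj_def dquat_eq_iff quat_eq_iff times_dquat_def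
      times_quat_def plus_quat_def algebra_simps)

lemma dcnj_fixed_imp_dquat_of_dual:
  assumes "dcnj x = x"
  shows "dquat_of_dual (dq_scalar x) = x"
  using assms by (simp add: dcnj_def qcnj_def dquat_eq_iff quat_eq_iff dquat_of_dual_def
      dq_scalar_def quat_of_real_def)

lemma dcnj_dquat_of_dual [simp]: "dcnj (dquat_of_dual z) = dquat_of_dual z"
  by (simp add: dcnj_def qcnj_def dquat_of_dual_def quat_of_real_def)

lemma dquat_of_dual_0 [simp]: "dquat_of_dual 0 = 0"
  and dquat_of_dual_1 [simp]: "dquat_of_dual 1 = 1"
  and dquat_of_dual_add: "dquat_of_dual (a + b) = dquat_of_dual a + dquat_of_dual b"
  and dquat_of_dual_mult: "dquat_of_dual (a * b) = dquat_of_dual a * dquat_of_dual b"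
  by (simp_all add: dquat_eq_iff quat_eq_iff dquat_of_dual_def quat_of_real_def zero_dual_def
      one_dual_def plus_dual_def times_dual_def zero_dquat_def one_dquat_def plus_dquat_def
      times_dquat_def zero_quat_def one_quat_def plus_quat_def times_quat_def)

lemma dquat_of_dual_eq_0_iff [simp]: "dquat_of_dual z = 0 \<longleftrightarrow> z = 0"
  by (simp add: dquat_of_dual_def quat_of_real_def dquat_eq_iff quat_eq_iff zero_dquat_def
      zero_quat_def dual_eq_iff zero_dual_def)

lemma dquat_of_dual_sum: "dquat_of_dual (sum f A) = (\<Sum>a\<in>A. dquat_of_dual (f a))"
  by (induction A rule: infinite_finite_induct) (simp_all add: dquat_of_dual_add)

lemma primal_dquat_of_dual: "primal (dquat_of_dual z) = quat_of_real (dre z)"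
  by (simp add: dquat_of_dual_def)

definition dq_inverse :: "dquat \<Rightarrow> dquat" where
  "dq_inverse x = DQ (inverse (primal x)) (- (inverse (primal x) * dualpart x * inverse (primal x)))"

lemma dq_inverse_left: "primal x \<noteq> 0 \<Longrightarrow> dq_inverse x * x = 1"
  by (simp add: dq_inverse_def times_dquat_def one_dquat_def mult.assoc)

lemma dq_inverse_right: "primal x \<noteq> 0 \<Longrightarrow> x * dq_inverse x = 1"
  by (simp add: dq_inverse_def times_dquat_def one_dquat_def mult.assoc[symmetric])

lemma dq_mult_left_cancel:
  assumes "primal a \<noteq> 0" and "a * x = a * y"
  shows "x = y"
  by (metis assms dq_inverse_left mult.assoc mult_1)

lemma dq_mult_right_cancel:
  assumes "primal a \<noteq> 0" and "x * a = y * a"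
  shows "x = y"
  by (metis assms dq_inverse_right mult.assoc mult_1_right)

lemma coeff_pmul: "coeff (pmul p q) k = (\<Sum>i\<le>k. coeff p i * coeff q (k - i))"
proof -
  have "coeff (pmul p q) k
      = (\<Sum>i\<le>degree p. \<Sum>j\<le>degree q. if i + j = k then coeff p i * coeff q j else 0)"
    by (simp add: pmul_def coeff_sum coeff_monom)
  also have "\<dots> = (\<Sum>i\<le>degree p. if i \<le> k then coeff p i * coeff q (k - i) else 0)"
  proof (rule sum.cong[OF refl])
    fix i
    have "(\<Sum>j\<le>degree q. if i + j = k then coeff p i * coeff q j else 0)
        = (\<Sum>j\<le>degree q. if j = k - i then (if i \<le> k then coeff p i * coeff q j else 0) else 0)"
      by (rule sum.cong) auto
    also have "\<dots> = (if i \<le> k then coeff p i * coeff q (k - i) else 0)"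
      by (auto simp: coeff_eq_0)
    finally show "(\<Sum>j\<le>degree q. if i + j = k then coeff p i * coeff q j else 0) = \<dots>" .
  qed
  also have "\<dots> = (\<Sum>i\<le>degree p + k. if i \<le> k then coeff p i * coeff q (k - i) else 0)"
    by (rule sum.mono_neutral_left) (auto simp: coeff_eq_0)
  also have "\<dots> = (\<Sum>i\<le>k. if i \<le> k then coeff p i * coeff q (k - i) else 0)"
    by (rule sum.mono_neutral_right) auto
  finally show ?thesis
    by simp
qed

text \<open>Formal power series over a \<open>ring_1\<close> multiply by the same Cauchy product, so the ring
  laws of \<open>pmul\<close> can be read off from those of \<open>fps\<close>.\<close>

lemma fps_of_poly_pmul: "fps_of_poly (pmul p q) = fps_of_poly p * fps_of_poly q"
  by (simp add: fps_eq_iff fps_mult_nth coeff_pmul atLeast0AtMost)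

lemma pmul_0_left [simp]: "pmul 0 p = 0"
  and pmul_assoc: "pmul (pmul p q) r = pmul p (pmul q r)"
  and pmul_add_left: "pmul (p + q) r = pmul p r + pmul q r"
  and pmul_diff_left: "pmul (p - q) r = pmul p r - pmul q r"
  for p q r :: "'a::ring_1 poly"
  by (simp_all add: fps_of_poly_eq_iff[symmetric] fps_of_poly_pmul fps_of_poly_add
      fps_of_poly_diff mult.assoc algebra_simps)

lemma pmul_const_left: "pmul [:c:] p = map_poly ((*) c) p"
proof (rule poly_eqI)
  fix k
  have "coeff (pmul [:c:] p) k = (\<Sum>i\<in>{0}. coeff [:c:] i * coeff p (k - i))"
    unfolding coeff_pmul by (rule sum.mono_neutral_right) (auto simp: coeff_pCons split: nat.splits)
  then show "coeff (pmul [:c:] p) k = coeff (map_poly ((*) c) p) k"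
    by (simp add: coeff_map_poly)
qed

lemma pmul_const_right: "pmul p [:c:] = map_poly (\<lambda>x. x * c) p"
proof (rule poly_eqI)
  fix k
  have "coeff (pmul p [:c:]) k = (\<Sum>i\<in>{k}. coeff p i * coeff [:c:] (k - i))"
    unfolding coeff_pmul by (rule sum.mono_neutral_right) (auto simp: coeff_pCons split: nat.splits)
  then show "coeff (pmul p [:c:]) k = coeff (map_poly (\<lambda>x. x * c) p) k"
    by (simp add: coeff_map_poly)
qed

lemma degree_pmul_le: "degree (pmul p q) \<le> degree p + degree q"
proof (rule degree_le, intro allI impI)
  fix k
  assume k: "degree p + degree q < k"
  show "coeff (pmul p q) k = 0"
    unfolding coeff_pmul
  proof (rule sum.neutral, intro ballI)
    fix i
    show "coeff p i * coeff q (k - i) = 0"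
      using k by (cases "i \<le> degree p") (auto simp: coeff_eq_0)
  qed
qed

lemma coeff_pmul_degree_sum:
  "coeff (pmul p q) (degree p + degree q) = lead_coeff p * lead_coeff q"
proof -
  let ?k = "degree p + degree q"
  have "coeff (pmul p q) ?k = (\<Sum>i\<in>{degree p}. coeff p i * coeff q (?k - i))"
    unfolding coeff_pmul
  proof (rule sum.mono_neutral_right)
    show "\<forall>i\<in>{..?k} - {degree p}. coeff p i * coeff q (?k - i) = 0"
    proof
      fix i
      assume "i \<in> {..?k} - {degree p}"
      then show "coeff p i * coeff q (?k - i) = 0"
        by (cases "i < degree p") (auto simp: coeff_eq_0)
    qed
  qed auto
  then show ?thesis
    by simp
qed

lemma degree_pmul_eq:
  assumes "lead_coeff p * lead_coeff q \<noteq> 0"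
  shows "degree (pmul p q) = degree p + degree q"
  using assms by (metis antisym coeff_pmul_degree_sum degree_pmul_le le_degree)

lemma pmul_linear: "pmul [:a0, a1:] [:b0, b1:] = [:a0 * b0, a0 * b1 + a1 * b0, a1 * b1:]"
proof (rule poly_eqI)
  fix k
  show "coeff (pmul [:a0, a1:] [:b0, b1:]) k = coeff [:a0 * b0, a0 * b1 + a1 * b0, a1 * b1:] k"
  proof (cases "k \<le> 2")
    case True
    then have "k = 0 \<or> k = 1 \<or> k = 2"
      by auto
    then show ?thesis
      by (auto simp: coeff_pmul numeral_2_eq_2 atMost_Suc)
  next
    case False
    have "degree [:a0, a1:] \<le> 1" "degree [:b0, b1:] \<le> 1"
      by simp_all
    then have "degree (pmul [:a0, a1:] [:b0, b1:]) \<le> 2"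
      using degree_pmul_le[of "[:a0, a1:]" "[:b0, b1:]"] by linarith
    with False show ?thesis
      by (auto simp: coeff_eq_0 coeff_pCons split: nat.splits)
  qed
qed

lemma pmul_central_commute:
  assumes "\<And>i y. coeff p i * y = y * coeff p i"
  shows "pmul p q = pmul q p"
proof (rule poly_eqI)
  fix k
  have "coeff (pmul p q) k = (\<Sum>i\<le>k. coeff q (k - i) * coeff p (k - (k - i)))"
    unfolding coeff_pmul using assms by (intro sum.cong) simp_all
  also have "\<dots> = coeff (pmul q p) k"
    unfolding coeff_pmul by (rule sum.reindex_bij_witness[where i="\<lambda>i. k - i" and j="\<lambda>i. k - i"]) auto
  finally show "coeff (pmul p q) k = coeff (pmul q p) k" .
qed

lemma pmul_monic_division:
  fixes D M :: "'a::ring_1 poly"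
  assumes "lead_coeff D = 1" and "0 < degree D"
  shows "\<exists>Q R. M = pmul Q D + R \<and> degree R < degree D"
proof (induction "degree M" arbitrary: M rule: less_induct)
  case less
  show ?case
  proof (cases "degree M < degree D")
    case True
    then show ?thesis
      by (intro exI[of _ 0] exI[of _ M]) simp
  next
    case False
    define T where "T = monom (lead_coeff M) (degree M - degree D)"
    have "M \<noteq> 0"
      using False assms(2) by auto
    then have T: "degree T + degree D = degree M" "lead_coeff T = lead_coeff M"
      using False by (simp_all add: T_def degree_monom_eq)
    have "degree (M - pmul T D) < degree M"
    proof -
      have "coeff (M - pmul T D) i = 0" if "degree M - 1 < i" for i
        using that T degree_pmul_le[of T D] coeff_pmul_degree_sum[of T D] assms(1)
        by (cases "i = degree M") (simp_all add: coeff_eq_0)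
      then have "degree (M - pmul T D) \<le> degree M - 1"
        by (simp add: degree_le)
      then show ?thesis
        using False assms(2) by linarith
    qed
    then obtain Q R where "M - pmul T D = pmul Q D + R" and "degree R < degree D"
      using less by blast
    then have "M = pmul (Q + T) D + R"
      by (simp add: pmul_add_left algebra_simps)
    with \<open>degree R < degree D\<close> show ?thesis
      by blast
  qed
qed

lemma linear_poly_eq: "degree p \<le> 1 \<Longrightarrow> p = [:coeff p 0, coeff p 1:]"
  by (rule poly_eqI) (auto simp: coeff_pCons coeff_eq_0 split: nat.splits)

lemma monic_quadratic_poly_eq:
  "degree p = 2 \<Longrightarrow> lead_coeff p = 1 \<Longrightarrow> p = [:coeff p 0, coeff p 1, 1:]"
  by (rule poly_eqI) (auto simp: coeff_pCons coeff_eq_0 numeral_2_eq_2 split: nat.splits)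

lemma pmul_monic_degree_le_imp_const:
  assumes "lead_coeff D = 1" and "degree (pmul D S) \<le> degree D"
  shows "S = [:coeff S 0:]"
proof (cases "S = 0")
  case False
  then have "degree (pmul D S) = degree D + degree S"
    using assms(1) by (simp add: degree_pmul_eq)
  then show ?thesis
    using assms(2) by (metis add_le_same_cancel1 degree_0_id le_zero_eq)
qed simp

lemma pmul_right_linear_eqD:
  assumes "pmul W [:- h, 1:] = [:r0, r1:]"
  shows "r0 = - (r1 * h)"
proof (cases "W = 0")
  case False
  then have "degree (pmul W [:- h, 1:]) = degree W + 1"
    by (simp add: degree_pmul_eq)
  moreover have "degree (pmul W [:- h, 1:]) \<le> 1"
    unfolding assms by simp
  ultimately have "W = [:coeff W 0:]"
    by (simp add: degree_0_id)
  then have "[:r0, r1:] = [:coeff W 0 * - h, coeff W 0:]"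
    using assms by (metis pmul_const_left map_poly_pCons map_poly_0 mult_zero_right mult_1_right)
  then show ?thesis
    by simp
next
  case True
  then show ?thesis
    using assms by simp
qed

lemma coeff_pconj: "coeff (pconj p) k = dcnj (coeff p k)"
  by (simp add: pconj_def coeff_map_poly)

lemma pconj_pCons [simp]: "pconj (pCons a p) = pCons (dcnj a) (pconj p)"
  by (simp add: pconj_def map_poly_pCons)

lemma pconj_0 [simp]: "pconj 0 = 0"
  by (simp add: pconj_def)

lemma pconj_pconj [simp]: "pconj (pconj p) = p"
  by (rule poly_eqI) (simp add: coeff_pconj)

lemma pconj_diff [simp]: "pconj (p - q) = pconj p - pconj q"
  by (rule poly_eqI) (simp add: coeff_pconj)

lemma pconj_pmul: "pconj (pmul p q) = pmul (pconj q) (pconj p)"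
proof (rule poly_eqI)
  fix k
  have "coeff (pconj (pmul p q)) k = (\<Sum>i\<le>k. dcnj (coeff q (k - i)) * dcnj (coeff p (k - (k - i))))"
    by (simp add: coeff_pconj coeff_pmul dcnj_sum)
  also have "\<dots> = coeff (pmul (pconj q) (pconj p)) k"
    unfolding coeff_pmul coeff_pconj
    by (rule sum.reindex_bij_witness[where i="\<lambda>i. k - i" and j="\<lambda>i. k - i"]) auto
  finally show "coeff (pconj (pmul p q)) k = coeff (pmul (pconj q) (pconj p)) k" .
qed

lemma degree_pconj [simp]: "degree (pconj p) = degree p"
  by (simp add: pconj_def degree_map_poly)

lemma pconj_fixed_imp_pmul_commute: "pconj N = N \<Longrightarrow> pmul N X = pmul X N"
  by (metis coeff_pconj dcnj_fixed_imp_commute pmul_central_commute)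

lemma primal_poly_add: "primal_poly (p + q) = primal_poly p + primal_poly q"
  by (rule poly_eqI) (simp add: primal_poly_def coeff_map_poly)

lemma primal_poly_pmul: "primal_poly (pmul p q) = pmul (primal_poly p) (primal_poly q)"
  by (rule poly_eqI) (simp add: primal_poly_def coeff_map_poly coeff_pmul primal_sum)

lemma dre_0 [simp]: "dre 0 = 0"
  by (simp add: zero_dual_def)

lemma dq_scalar_0 [simp]: "dq_scalar 0 = 0"
  by (simp add: dq_scalar_def zero_dual_def zero_dquat_def zero_quat_def)

lemma primal_poly_dquat_of_dual:
  "primal_poly (map_poly dquat_of_dual N) = map_poly quat_of_real (dual_primal_poly N)"
  by (rule poly_eqI) (simp add: primal_poly_def dual_primal_poly_def coeff_map_poly
      primal_dquat_of_dual)

lemma map_poly_dquat_of_dual_mult: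
  "map_poly dquat_of_dual (A * B) = pmul (map_poly dquat_of_dual A) (map_poly dquat_of_dual B)"
  by (rule poly_eqI) (simp add: coeff_map_poly coeff_mult coeff_pmul dquat_of_dual_sum
      dquat_of_dual_mult)

lemma pmul_pconj_self: "pmul M (pconj M) = map_poly dquat_of_dual (norm_poly M)"
proof (rule poly_eqI)
  fix k
  have "dcnj (coeff (pmul M (pconj M)) k) = coeff (pmul M (pconj M)) k"
    by (metis coeff_pconj pconj_pconj pconj_pmul)
  then show "coeff (pmul M (pconj M)) k = coeff (map_poly dquat_of_dual (norm_poly M)) k"
    by (simp add: norm_poly_def coeff_map_poly dcnj_fixed_imp_dquat_of_dual)
qed

lemma pmul_linear_conj_commute: "pmul [:- h, 1:] [:- dcnj h, 1:] = pmul [:- dcnj h, 1:] [:- h, 1:]"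
  by (simp add: pmul_linear dcnj_mult_self_commute add.commute)

lemma central_remainder_product:
  fixes m m' n c q q' :: "'a::ring_1"
  assumes "m * m' = n * c" and "q * n = n * q" and "m * n = n * m"
  shows "(m - q * n) * (m' - n * q') = n * (c - q * m' - m * q' + q * (n * q'))"
proof -
  have "(m - q * n) * (m' - n * q') = m * m' - (m * n) * q' - (q * n) * m' + (q * n) * (n * q')"
    by (simp add: algebra_simps)
  also have "\<dots> = n * (c - q * m' - m * q' + q * (n * q'))"
    using assms by (simp add: algebra_simps)
  finally show ?thesis .
qed

lemma remainder_norm_const_multiple:
  assumes N: "lead_coeff N = 1" "degree N = 2" "pconj N = N"
    and norm: "pmul M (pconj M) = pmul N C"
    and div: "M = pmul Q N + R" "degree R \<le> 1"
  shows "\<exists>s. pmul R (pconj R) = pmul N [:s:]"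
proof -
  let ?S = "C - pmul Q (pconj M) - pmul M (pconj Q) + pmul Q (pmul N (pconj Q))"
  have R: "R = M - pmul Q N"
    using div(1) by simp
  then have R': "pconj R = pconj M - pmul N (pconj Q)"
    using N(3) by (simp add: pconj_pmul)
  have "fps_of_poly M * fps_of_poly (pconj M) = fps_of_poly N * fps_of_poly C"
    "fps_of_poly Q * fps_of_poly N = fps_of_poly N * fps_of_poly Q"
    "fps_of_poly M * fps_of_poly N = fps_of_poly N * fps_of_poly M"
    using norm pconj_fixed_imp_pmul_commute[OF N(3)] by (metis fps_of_poly_pmul)+
  then have "fps_of_poly (pmul R (pconj R)) = fps_of_poly (pmul N ?S)"
    unfolding R' unfolding R fps_of_poly_pmul fps_of_poly_diff fps_of_poly_add
    by (rule central_remainder_product)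
  then have RS: "pmul R (pconj R) = pmul N ?S"
    by (simp add: fps_of_poly_eq_iff)
  have "degree (pmul N ?S) \<le> degree N"
    using degree_pmul_le[of R "pconj R"] div(2) N(2) unfolding RS by simp
  with N(1) have "?S = [:coeff ?S 0:]"
    by (rule pmul_monic_degree_le_imp_const)
  then show ?thesis
    using RS by metis
qed

lemma linear_norm_eq_iff:
  "pmul [:r0, r1:] (pconj [:r0, r1:]) = pmul [:n0, n1, 1:] [:s:]
    \<longleftrightarrow> r0 * dcnj r0 = n0 * s \<and> r0 * dcnj r1 + r1 * dcnj r0 = n1 * s \<and> r1 * dcnj r1 = s"
  by (simp add: pmul_linear pmul_const_right map_poly_pCons)

lemma linear_norm_primal_lead_nonzero:
  assumes "pmul [:r0, r1:] (pconj [:r0, r1:]) = pmul [:n0, n1, 1:] [:s:]"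
    and "primal r0 \<noteq> 0 \<or> primal r1 \<noteq> 0"
  shows "primal r1 \<noteq> 0"
proof
  assume "primal r1 = 0"
  moreover have "r0 * dcnj r0 = n0 * (r1 * dcnj r1)"
    using assms(1) unfolding linear_norm_eq_iff by simp
  ultimately have "primal r0 * qcnj (primal r0) = 0"
    by (metis mult_zero_left mult_zero_right primal_dcnj primal_mult)
  with \<open>primal r1 = 0\<close> assms(2) show False
    by (simp add: quat_mult_qcnj_eq_0_iff)
qed

lemma linear_norm_right_factor:
  assumes norm: "pmul [:r0, r1:] (pconj [:r0, r1:]) = pmul [:n0, n1, 1:] [:s:]"
    and r1: "primal r1 \<noteq> 0" and r0: "r0 = - (r1 * h)"
  shows "pmul [:- h, 1:] [:- dcnj h, 1:] = [:n0, n1, 1:]"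
proof -
  have e: "r0 * dcnj r0 = n0 * s" "r0 * dcnj r1 + r1 * dcnj r0 = n1 * s" and s: "s = r1 * dcnj r1"
    using norm unfolding linear_norm_eq_iff by simp_all
  have cancel: "x = y" if "x * s = y * s" for x y
  proof -
    have "(x * r1) * dcnj r1 = (y * r1) * dcnj r1"
      using that by (simp add: s mult.assoc)
    then have "x * r1 = y * r1"
      by (rule dq_mult_right_cancel[rotated]) (simp add: r1)
    then show "x = y"
      by (rule dq_mult_right_cancel[rotated]) (rule r1)
  qed
  \<comment> \<open>norm and trace of \<open>h\<close> are self-conjugate, hence central\<close>
  have norm_comm: "r1 * (h * dcnj h) = (h * dcnj h) * r1"
    by (rule dcnj_fixed_imp_commute[symmetric]) simp
  have trace_comm: "r1 * (h + dcnj h) = (h + dcnj h) * r1"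
    by (rule dcnj_fixed_imp_commute[symmetric]) (simp add: add.commute)
  have "r0 * dcnj r0 = r1 * (h * dcnj h) * dcnj r1"
    unfolding r0 by (simp add: mult.assoc)
  also have "\<dots> = (h * dcnj h) * s"
    unfolding s by (simp only: norm_comm mult.assoc)
  finally have "r0 * dcnj r0 = (h * dcnj h) * s" .
  with e(1) have "(h * dcnj h) * s = n0 * s"
    by simp
  then have n0: "h * dcnj h = n0"
    by (rule cancel)
  have "r0 * dcnj r1 + r1 * dcnj r0 = - (r1 * (h + dcnj h) * dcnj r1)"
    unfolding r0 by (simp add: mult.assoc algebra_simps)
  also have "\<dots> = (- (h + dcnj h)) * s"
    unfolding s by (simp only: trace_comm mult.assoc minus_mult_left)
  finally have "r0 * dcnj r1 + r1 * dcnj r0 = (- (h + dcnj h)) * s" .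
  with e(2) have "(- h - dcnj h) * s = n1 * s"
    by simp
  then have n1: "- h - dcnj h = n1"
    by (rule cancel)
  show ?thesis
    using n0 n1 by (simp add: pmul_linear)
qed

lemma primal_remainder_nonzero:
  assumes "M = pmul Q N + [:r0, r1:]" and "pconj N = N"
    and "\<not> (\<exists>Q'. primal_poly M = pmul (primal_poly N) Q')"
  shows "primal r0 \<noteq> 0 \<or> primal r1 \<noteq> 0"
proof (rule ccontr)
  assume "\<not> (primal r0 \<noteq> 0 \<or> primal r1 \<noteq> 0)"
  then have "primal_poly [:r0, r1:] = 0"
    by (simp add: primal_poly_def map_poly_pCons)
  then have "primal_poly M = pmul (primal_poly N) (primal_poly Q)"
    using assms(1) pconj_fixed_imp_pmul_commute[OF assms(2), of Q, symmetric]
    by (simp add: primal_poly_add primal_poly_pmul)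
  with assms(3) show False
    by blast
qed

lemma right_linear_factor_iff:
  assumes div: "M = pmul Q N + [:r0, r1:]" and N: "pmul [:- h, 1:] [:- dcnj h, 1:] = N"
  shows "(\<exists>Q'. M = pmul Q' [:- h, 1:]) \<longleftrightarrow> r0 = - (r1 * h)"
proof -
  have N': "N = pmul [:- dcnj h, 1:] [:- h, 1:]"
    using N pmul_linear_conj_commute by simp
  show ?thesis
  proof
    assume "\<exists>Q'. M = pmul Q' [:- h, 1:]"
    then obtain Q' where "M = pmul Q' [:- h, 1:]" ..
    moreover have "M - pmul Q N = [:r0, r1:]"
      using div by simp
    ultimately have "pmul (Q' - pmul Q [:- dcnj h, 1:]) [:- h, 1:] = [:r0, r1:]"
      using N' by (simp add: pmul_diff_left pmul_assoc)
    then show "r0 = - (r1 * h)"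
      by (rule pmul_right_linear_eqD)
  next
    assume "r0 = - (r1 * h)"
    then have "[:r0, r1:] = pmul [:r1:] [:- h, 1:]"
      by (simp add: pmul_const_left map_poly_pCons)
    then have "M = pmul (pmul Q [:- dcnj h, 1:] + [:r1:]) [:- h, 1:]"
      using div N' by (simp add: pmul_add_left pmul_assoc)
    then show "\<exists>Q'. M = pmul Q' [:- h, 1:]"
      by blast
  qed
qed

theorem lemma3:
  fixes M :: "dquat poly" and N :: "dual poly"
  assumes "lead_coeff M = 1"
    and "lead_coeff N = 1" and "degree N = 2"
    and "N dvd norm_poly M"
    and "\<not> (\<exists>Q :: quat poly.
            primal_poly M = pmul (map_poly quat_of_real (dual_primal_poly N)) Q)"
  shows "\<exists>!h :: dquat.
           (\<exists>Q :: dquat poly. M = pmul Q [:- h, 1:])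
         \<and> pmul [:- h, 1:] [:- dcnj h, 1:] = map_poly dquat_of_dual N"
proof -
  define Nd where "Nd = map_poly dquat_of_dual N"
  have Nd: "lead_coeff Nd = 1" "degree Nd = 2" "pconj Nd = Nd"
    using assms(2,3)
    by (simp_all add: Nd_def degree_map_poly coeff_map_poly pconj_def map_poly_map_poly comp_def)
  obtain Q R where div: "M = pmul Q Nd + R" "degree R < 2"
    using pmul_monic_division[of Nd M] Nd by auto
  define r0 r1 where "r0 = coeff R 0" and "r1 = coeff R 1"
  have R: "R = [:r0, r1:]"
    unfolding r0_def r1_def using div(2) by (intro linear_poly_eq) simp
  have "primal r0 \<noteq> 0 \<or> primal r1 \<noteq> 0"
    using primal_remainder_nonzero div(1) Nd(3) assms(5) unfolding R Nd_def
    by (metis primal_poly_dquat_of_dual)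
  obtain C where "pmul M (pconj M) = pmul Nd C"
    using assms(4) by (auto simp: pmul_pconj_self Nd_def map_poly_dquat_of_dual_mult elim!: dvdE)
  then obtain s where norm: "pmul [:r0, r1:] (pconj [:r0, r1:]) = pmul Nd [:s:]"
    using remainder_norm_const_multiple Nd div unfolding R by fastforce
  obtain n0 n1 where Nd_eq: "Nd = [:n0, n1, 1:]"
    using monic_quadratic_poly_eq[OF Nd(2,1)] by blast
  have r1: "primal r1 \<noteq> 0"
    using linear_norm_primal_lead_nonzero norm \<open>primal r0 \<noteq> 0 \<or> primal r1 \<noteq> 0\<close> unfolding Nd_eq by blast
  define h where "h = - (dq_inverse r1 * r0)"
  have r0: "r0 = - (r1 * h)"
    using r1 by (simp add: h_def mult.assoc[symmetric] dq_inverse_right)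
  have factor: "pmul [:- h, 1:] [:- dcnj h, 1:] = Nd"
    using linear_norm_right_factor norm r1 r0 unfolding Nd_eq by blast
  show ?thesis
  proof (rule ex1I[of _ h])
    show "(\<exists>Q. M = pmul Q [:- h, 1:]) \<and> pmul [:- h, 1:] [:- dcnj h, 1:] = map_poly dquat_of_dual N"
      using right_linear_factor_iff[OF div(1)[unfolded R] factor] r0 factor Nd_def by blast
  next
    fix h'
    assume "(\<exists>Q. M = pmul Q [:- h', 1:])
      \<and> pmul [:- h', 1:] [:- dcnj h', 1:] = map_poly dquat_of_dual N"
    then have "r0 = - (r1 * h')"
      using right_linear_factor_iff[OF div(1)[unfolded R]] Nd_def by blast
    with r0 r1 show "h' = h"
      by (simp add: dq_mult_left_cancel)
  qed
qed

end
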